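(* Let $k, r, a, b, m, n$ be integers satisfying $$k\geq 1,\quad 0\leq a\leq m,\quad \max\{0,\tfrac{a}{k}-r\}\leq b\leq n,\quad n\geq \tfrac{m}{k}-r.$$ Let $L_{\frac1k,r}(a,b;m,n)$ be the set of lattice paths from $(a,b)$ to $(m,n)$ with unit steps $(1,0)$ and $(0,1)$ that stay weakly above the line $y=\frac{x}{k}-r$. Then $$|L_{\frac1k,r}(a,b;m,n)|=\sum_{i=0}^{\lfloor\frac{k(n+r)-m}{k+1}\rfloor}(-1)^i\,\frac{k(b+r)-a+1}{k(n+r-i)-a+1}\binom{(k+1)(n-i)-a-b+kr}{n-b-i}\binom{k(n+r-i)-m}{i}.$$
   Context: A path stays weakly above the line $y=\frac{x}{k}-r$ if every lattice point $(x,y)$ on it satisfies $y\geq \frac{x}{k}-r$. $\lfloor x\rfloor$ is the floor function. Binomial coefficients $\binom{N}{j}$ with $N\ge0$ equal $0$ when $j<0$ or $j>N$. *)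

theory Defs
  imports Complex_Main
begin

fun lp_step :: "int \<times> int \<Rightarrow> bool \<Rightarrow> int \<times> int" where
  "lp_step (x, y) True = (x + 1, y)"
| "lp_step (x, y) False = (x, y + 1)"

fun lp_points :: "int \<times> int \<Rightarrow> bool list \<Rightarrow> (int \<times> int) list" where
  "lp_points p [] = [p]"
| "lp_points p (s # ss) = p # lp_points (lp_step p s) ss"

definition lattice_paths_above ::
  "int \<Rightarrow> int \<Rightarrow> int \<Rightarrow> int \<Rightarrow> int \<Rightarrow> int \<Rightarrow> bool list set" where
  "lattice_paths_above k r a b m n =
     {ss. last (lp_points (a, b) ss) = (m, n) \<and>
          (\<forall>(x, y) \<in> set (lp_points (a, b) ss). real_of_int y \<ge> real_of_int x / real_of_int k - real_of_int r)}"

text \<open>Binomial coefficient with integer arguments: N choose j for N \<ge> 0, 0 if j < 0 or j > N.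
  (Negative N never arises in the statement.)\<close>
definition binom_int :: "int \<Rightarrow> int \<Rightarrow> real" where
  "binom_int N j = (if 0 \<le> N \<and> 0 \<le> j then real (nat N choose nat j) else 0)"

end

theory Submission
  imports Defs
begin

text \<open>
  Describe a lattice point by its slack \<open>c = k(y + r) - x\<close> above the line and its distances
  \<open>d = n - y\<close>, \<open>u = m - x\<close> to the target. A north step maps \<open>(c, d, u)\<close> to \<open>(c + k, d - 1, u)\<close>;
  an east step maps it to \<open>(c - 1, d, u - 1)\<close> and is admissible only for \<open>c > 0\<close>. So the path
  count is determined by this recurrence and the value 1 at \<open>d = u = 0\<close>.

  The Raney numbers \<open>R(c, j) = (c + 1) / (c + kj + 1) \<cdot> C(c + (k + 1)j, j)\<close> count the admissible
  paths from slack \<open>c\<close> that end on the line after \<open>j\<close> north steps; they satisfy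
  \<open>R(c + 1, j + 1) = R(c, j + 1) + R(c + k + 1, j)\<close> and \<open>R(0, j + 1) = R(k, j)\<close>.
  With these, the alternating sum \<open>\<Sum>j\<le>d. (-1)^(d-j) R(c, j) C(c + kj - u, d - j)\<close> obeys the
  same recurrence as the path count, hence equals it. Substituting \<open>i = d - j\<close> gives the sum of
  the statement, whose terms vanish for \<open>i > (k(n + r) - m) / (k + 1)\<close>.
\<close>

lemma Suc_mult_choose_Suc: "Suc j * (N choose Suc j) = (N - j) * (N choose j)"
  using binomial_absorption[of j N] binomial_absorb_comp[of N j] by simp

text \<open>The difference form of \<open>R(c, j)\<close> (see \<open>raney_closed_form\<close>); in it the recurrences of
  \<open>R\<close> are instances of Pascal's rule.\<close>

fun raney :: "nat \<Rightarrow> nat \<Rightarrow> nat \<Rightarrow> real" where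
  "raney K c 0 = 1"
| "raney K c (Suc j) =
     real ((c + (K + 1) * Suc j) choose Suc j) - real K * real ((c + (K + 1) * Suc j) choose j)"

lemma raney_Suc_Suc: "raney K (Suc c) (Suc j) = raney K c (Suc j) + raney K (c + K + 1) j"
proof (cases j)
  case (Suc i)
  define N where "N = c + (K + 1) * Suc j"
  have "Suc c + (K + 1) * Suc j = Suc N" and "c + K + 1 + (K + 1) * Suc i = N"
    by (simp_all add: N_def Suc)
  then have "raney K (Suc c) (Suc j) = real (Suc N choose Suc j) - real K * real (Suc N choose j)"
    and "raney K c (Suc j) = real (N choose Suc j) - real K * real (N choose j)"
    and "raney K (c + K + 1) j = real (N choose j) - real K * real (N choose i)"
    by (simp_all only: raney.simps N_def Suc)
  then show ?thesis
    by (simp add: Suc algebra_simps)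
qed simp

lemma raney_0_Suc: "raney K 0 (Suc j) = raney K K j"
proof (cases j)
  case (Suc i)
  define M where "M = K + (K + 1) * j"
  have "Suc j * (M choose Suc j) = (M - j) * (M choose j)"
    by (rule Suc_mult_choose_Suc)
  also have "M - j = K * Suc j"
    by (simp add: M_def)
  finally have "Suc j * (M choose Suc j) = Suc j * (K * (M choose j))"
    by (simp only: ac_simps)
  then have key: "M choose Suc j = K * (M choose j)"
    by (simp only: mult_left_cancel nat.distinct(1) simp_thms)
  have "(K + 1) * Suc j = Suc M" and "K + (K + 1) * Suc i = M"
    by (simp_all add: M_def Suc)
  then have "raney K 0 (Suc j) = real (Suc M choose Suc j) - real K * real (Suc M choose j)"
    and "raney K K j = real (M choose j) - real K * real (M choose i)"
    by (simp_all only: raney.simps add_0 Suc)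
  then show ?thesis
    using key by (simp add: Suc algebra_simps)
qed simp

lemma raney_closed_form:
  "raney K c j = (real c + 1) / (real c + real K * real j + 1) * real ((c + (K + 1) * j) choose j)"
proof (cases j)
  case (Suc i)
  define N where "N = c + (K + 1) * j"
  have "0 \<le> real c + real K * real j"
    by simp
  then have pos: "real c + real K * real j + 1 > 0"
    by linarith
  have "Suc i * (N choose Suc i) = (N - i) * (N choose i)"
    by (rule Suc_mult_choose_Suc)
  also have "N - i = c + K * j + 1"
    by (simp add: N_def Suc)
  finally have "real (N choose i) * (real c + real K * real j + 1) = real j * real (N choose j)"
    unfolding Suc by (metis of_nat_mult of_nat_add of_nat_1 mult.commute)
  then have "real (N choose i) = real j * real (N choose j) / (real c + real K * real j + 1)"
    using pos by (simp add: eq_divide_eq)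
  then have "raney K c j
      = real (N choose j) - real K * (real j * real (N choose j) / (real c + real K * real j + 1))"
    by (simp add: Suc N_def)
  also have "\<dots> = (real c + 1) / (real c + real K * real j + 1) * real (N choose j)"
    using pos by (simp add: field_simps)
  finally show ?thesis
    by (simp only: N_def)
qed simp

declare raney.simps(2) [simp del]

lemma binom_int_of_nat: "binom_int (int N) (int j) = real (N choose j)"
  by (simp add: binom_int_def)

text \<open>The arguments are the slack \<open>c\<close>, the height \<open>d\<close> and the width \<open>u\<close> of the remaining path.\<close>

definition path_formula :: "nat \<Rightarrow> nat \<Rightarrow> nat \<Rightarrow> int \<Rightarrow> real" where
  "path_formula K c d u =
     (\<Sum>j\<in>{0..d}. (-1) ^ (d - j) * raney K c j * binom_int (int c + int K * int j - u) (int (d - j)))"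

lemma path_formula_0: "u \<le> int c \<Longrightarrow> path_formula K c 0 u = 1"
  by (simp add: path_formula_def binom_int_def)

lemma path_formula_Suc_Suc:
  "path_formula K (Suc c) (Suc d) u = path_formula K c (Suc d) (u - 1) + path_formula K (c + K + 1) d u"
proof -
  define B where "B j = binom_int (int (Suc c) + int K * int (Suc j) - u) (int (d - j))" for j
  have "path_formula K (Suc c) (Suc d) u = (-1) ^ Suc d * binom_int (int (Suc c) - u) (int (Suc d))
      + (\<Sum>j\<in>{0..d}. (-1) ^ (d - j) * (raney K c (Suc j) + raney K (c + K + 1) j) * B j)"
    unfolding path_formula_def sum.atLeast0_atMost_Suc_shift by (simp add: raney_Suc_Suc B_def)
  moreover have "path_formula K c (Suc d) (u - 1) = (-1) ^ Suc d * binom_int (int (Suc c) - u) (int (Suc d))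
      + (\<Sum>j\<in>{0..d}. (-1) ^ (d - j) * raney K c (Suc j) * B j)"
    unfolding path_formula_def sum.atLeast0_atMost_Suc_shift by (simp add: B_def algebra_simps)
  moreover have "path_formula K (c + K + 1) d u = (\<Sum>j\<in>{0..d}. (-1) ^ (d - j) * raney K (c + K + 1) j * B j)"
    unfolding path_formula_def by (simp add: B_def algebra_simps)
  ultimately show ?thesis
    by (simp add: algebra_simps sum.distrib)
qed

lemma path_formula_0_Suc:
  "path_formula K 0 (Suc d) u = (-1) ^ Suc d * binom_int (- u) (int (Suc d)) + path_formula K K d u"
  unfolding path_formula_def sum.atLeast0_atMost_Suc_shift by (simp add: raney_0_Suc algebra_simps)

text \<open>The recurrence in \<open>c\<close> lowers \<open>u\<close>, so the induction must pass through targets with \<open>u < 0\<close>.\<close>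

lemma path_formula_nonpos:
  "path_formula K c d (- int s) = (if s = 0 then 1 else (-1) ^ d * real ((s - 1) choose d))"
proof (induction d arbitrary: c s)
  case 0
  then show ?case
    by (simp add: path_formula_0)
next
  case (Suc d)
  note IH_d = Suc.IH
  show ?case
  proof (induction c arbitrary: s)
    case 0
    have "path_formula K 0 (Suc d) (- int s)
        = (-1) ^ Suc d * real (s choose Suc d) + path_formula K K d (- int s)"
      using path_formula_0_Suc[of K d "- int s"] by (simp only: minus_minus binom_int_of_nat)
    then show ?case
      unfolding IH_d by (cases s) (simp_all add: algebra_simps)
  next
    case (Suc c)
    have "- int s - 1 = - int (Suc s)"
      by simp
    then have "path_formula K (Suc c) (Suc d) (- int s)
        = path_formula K c (Suc d) (- int (Suc s)) + path_formula K (c + K + 1) d (- int s)"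
      by (simp only: path_formula_Suc_Suc)
    then show ?case
      unfolding Suc.IH IH_d by (cases s) (simp_all add: algebra_simps)
  qed
qed

corollary path_formula_at_0: "path_formula K c d 0 = 1"
  using path_formula_nonpos[of K c d 0] by simp

lemma path_formula_step:
  assumes "0 < d \<or> 0 < u" and "0 \<le> u" and "u \<le> int (c + K * d)"
  shows "path_formula K c d u =
    (if 0 < c \<and> 0 < u then path_formula K (c - 1) d (u - 1) else 0)
    + (if 0 < d then path_formula K (c + K) (d - 1) u else 0)"
proof (cases d)
  case 0
  then obtain c' where "c = Suc c'"
    using assms by (cases c) auto
  then show ?thesis
    using 0 assms by (simp add: path_formula_0)
next
  case (Suc d')
  show ?thesis
  proof (cases "u = 0")
    case True
    then show ?thesis
      using Suc by (simp add: path_formula_at_0)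
  next
    case False
    show ?thesis
    proof (cases c)
      case 0
      have "binom_int (- u) (int (Suc d')) = 0"
        using False assms by (simp add: binom_int_def)
      then show ?thesis
        using 0 Suc by (simp add: path_formula_0_Suc)
    next
      case (Suc c')
      then show ?thesis
        using \<open>d = Suc d'\<close> False assms by (simp add: path_formula_Suc_Suc algebra_simps)
    qed
  qed
qed

lemma lp_points_not_Nil: "lp_points p ss \<noteq> []"
  by (induction p ss rule: lp_points.induct) auto

lemma last_lp_points:
  "last (lp_points (a, b) ss) = (a + int (length (filter id ss)), b + int (length (filter Not ss)))"
proof (induction ss arbitrary: a b)
  case (Cons s ss)
  then show ?case
    by (cases s) (simp_all add: lp_points_not_Nil)
qed simp

lemma above_line_iff:
  assumes "0 < k"
  shows "real_of_int x / real_of_int k - real_of_int r \<le> real_of_int y \<longleftrightarrow> x \<le> k * (y + r)"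
proof -
  have "real_of_int x / real_of_int k - real_of_int r \<le> real_of_int y
      \<longleftrightarrow> real_of_int x \<le> real_of_int k * real_of_int (y + r)"
    using assms by (simp add: divide_le_eq algebra_simps)
  also have "\<dots> \<longleftrightarrow> x \<le> k * (y + r)"
    by (metis of_int_le_iff of_int_mult)
  finally show ?thesis .
qed

lemma finite_lattice_paths_above: "finite (lattice_paths_above k r a b m n)"
proof (rule finite_subset)
  show "lattice_paths_above k r a b m n \<subseteq> {ss. set ss \<subseteq> UNIV \<and> length ss \<le> nat (m - a + (n - b))}"
  proof
    fix ss
    assume "ss \<in> lattice_paths_above k r a b m n"
    then have "m = a + int (length (filter id ss))" and "n = b + int (length (filter Not ss))"
      by (simp_all add: lattice_paths_above_def last_lp_points)
    moreover have "length (filter id ss) + length (filter Not ss) = length ss"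
      using sum_length_filter_compl[of id ss] by (simp add: comp_def)
    ultimately show "ss \<in> {ss. set ss \<subseteq> UNIV \<and> length ss \<le> nat (m - a + (n - b))}"
      by simp
  qed
qed (rule finite_lists_length_le, simp)

lemma lattice_paths_above_eq_empty_if_beyond:
  "m < a \<or> n < b \<Longrightarrow> lattice_paths_above k r a b m n = {}"
  by (auto simp: lattice_paths_above_def last_lp_points)

lemma lattice_paths_above_eq_empty_if_below:
  assumes "\<not> real_of_int a / real_of_int k - real_of_int r \<le> real_of_int b"
  shows "lattice_paths_above k r a b m n = {}"
proof -
  have "(a, b) \<in> set (lp_points (a, b) ss)" for ss
    by (cases ss) simp_all
  then show ?thesis
    using assms by (fastforce simp: lattice_paths_above_def)
qed

lemma lattice_paths_above_unfold:
  assumes "real_of_int a / real_of_int k - real_of_int r \<le> real_of_int b"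
  shows "lattice_paths_above k r a b m n =
    (if (a, b) = (m, n) then {[]} else {})
    \<union> Cons True ` lattice_paths_above k r (a + 1) b m n
    \<union> Cons False ` lattice_paths_above k r a (b + 1) m n" (is "_ = ?R")
proof (rule set_eqI)
  fix ss
  show "ss \<in> lattice_paths_above k r a b m n \<longleftrightarrow> ss \<in> ?R"
  proof (cases ss)
    case (Cons s ss')
    then show ?thesis
      using assms by (cases s) (auto simp: lattice_paths_above_def lp_points_not_Nil)
  qed (use assms in \<open>auto simp: lattice_paths_above_def\<close>)
qed

lemma card_lattice_paths_above_target:
  assumes "real_of_int m / real_of_int k - real_of_int r \<le> real_of_int n"
  shows "card (lattice_paths_above k r m n m n) = 1"
  using lattice_paths_above_unfold[OF assms, of m n] by (simp add: lattice_paths_above_eq_empty_if_beyond)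

lemma card_lattice_paths_above_step:
  assumes "real_of_int a / real_of_int k - real_of_int r \<le> real_of_int b" and "(a, b) \<noteq> (m, n)"
  shows "card (lattice_paths_above k r a b m n) =
    card (lattice_paths_above k r (a + 1) b m n) + card (lattice_paths_above k r a (b + 1) m n)"
proof -
  have "lattice_paths_above k r a b m n =
      Cons True ` lattice_paths_above k r (a + 1) b m n \<union> Cons False ` lattice_paths_above k r a (b + 1) m n"
    using lattice_paths_above_unfold[OF assms(1), of m n] assms(2) by auto
  also have "card \<dots> = card (lattice_paths_above k r (a + 1) b m n) + card (lattice_paths_above k r a (b + 1) m n)"
    by (subst card_Un_disjoint) (auto simp: card_image finite_lattice_paths_above)
  finally show ?thesis .
qed

lemma card_lattice_paths_above_eq_path_formula:
  fixes k r a b m n :: int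
  assumes "1 \<le> k" and "a \<le> m" and "b \<le> n" and "a \<le> k * (b + r)" and "m \<le> k * (n + r)"
  shows "real (card (lattice_paths_above k r a b m n)) =
    path_formula (nat k) (nat (k * (b + r) - a)) (nat (n - b)) (m - a)"
  using assms(2-4)
proof (induction "nat (m - a + (n - b))" arbitrary: a b rule: less_induct)
  case less
  let ?L = "\<lambda>a b. lattice_paths_above k r a b m n"
  define c where "c = nat (k * (b + r) - a)"
  define d where "d = nat (n - b)"
  have above: "real_of_int x / real_of_int k - real_of_int r \<le> real_of_int y \<longleftrightarrow> x \<le> k * (y + r)" for x y
    using assms(1) by (simp add: above_line_iff)
  show ?case
  proof (cases "(a, b) = (m, n)")
    case True
    then show ?thesis
      using less.prems by (simp add: card_lattice_paths_above_target above path_formula_0)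
  next
    case False
    have east: "real (card (?L (a + 1) b)) =
        (if 0 < c \<and> 0 < m - a then path_formula (nat k) (c - 1) d (m - a - 1) else 0)"
    proof (cases "a < m \<and> a + 1 \<le> k * (b + r)")
      case True
      then have "real (card (?L (a + 1) b)) =
          path_formula (nat k) (nat (k * (b + r) - (a + 1))) (nat (n - b)) (m - (a + 1))"
        using less by (intro less.hyps) auto
      moreover have "nat (k * (b + r) - (a + 1)) = c - 1"
        using True by (simp add: c_def)
      ultimately show ?thesis
        using True by (simp add: c_def d_def algebra_simps)
    next
      case False
      then have "?L (a + 1) b = {}"
        using lattice_paths_above_eq_empty_if_beyond lattice_paths_above_eq_empty_if_below above
        by (metis add1_zle_eq not_less)
      then show ?thesis
        using False less.prems by (auto simp: c_def)
    qed
    have north: "real (card (?L a (b + 1))) =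
        (if 0 < d then path_formula (nat k) (c + nat k) (d - 1) (m - a) else 0)"
    proof (cases "b < n")
      case True
      then have "real (card (?L a (b + 1))) =
          path_formula (nat k) (nat (k * (b + 1 + r) - a)) (nat (n - (b + 1))) (m - a)"
        using less assms(1) by (intro less.hyps) (auto simp: algebra_simps)
      moreover have "nat (k * (b + 1 + r) - a) = c + nat k" and "nat (n - (b + 1)) = d - 1"
        using less.prems assms(1) by (simp_all add: c_def d_def algebra_simps nat_add_distrib[symmetric])
      ultimately show ?thesis
        using True by (simp add: d_def)
    next
      case False
      then show ?thesis
        using less.prems by (simp add: d_def lattice_paths_above_eq_empty_if_beyond)
    qed
    have "path_formula (nat k) c d (m - a) =
        (if 0 < c \<and> 0 < m - a then path_formula (nat k) (c - 1) d (m - a - 1) else 0)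
        + (if 0 < d then path_formula (nat k) (c + nat k) (d - 1) (m - a) else 0)"
      using False less.prems assms by (intro path_formula_step) (auto simp: c_def d_def algebra_simps)
    then show ?thesis
      using False less.prems east north
      by (simp add: card_lattice_paths_above_step above c_def d_def)
  qed
qed

definition path_count_term :: "int \<Rightarrow> int \<Rightarrow> int \<Rightarrow> int \<Rightarrow> int \<Rightarrow> int \<Rightarrow> int \<Rightarrow> real" where
  "path_count_term k r a b m n i =
     (-1) ^ nat i * (real_of_int (k * (b + r) - a + 1) / real_of_int (k * (n + r - i) - a + 1))
     * binom_int ((k + 1) * (n - i) - a - b + k * r) (n - b - i)
     * binom_int (k * (n + r - i) - m) i"

lemma path_count_term_reflect:
  fixes k r a b m n :: int
  assumes "0 \<le> k" and "a \<le> k * (b + r)" and "j \<le> nat (n - b)"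
  shows "path_count_term k r a b m n (n - b - int j) =
    (-1) ^ (nat (n - b) - j) * raney (nat k) (nat (k * (b + r) - a)) j
    * binom_int (k * (b + r) - a + k * int j - (m - a)) (n - b - int j)"
proof -
  define c where "c = nat (k * (b + r) - a)"
  define i where "i = n - b - int j"
  have c: "int c = k * (b + r) - a"
    using assms(2) by (simp add: c_def)
  have "n - b - i = int j" and "nat i = nat (n - b) - j" and "k * (b + r) - a + 1 = int c + 1"
    and "k * (n + r - i) - a + 1 = int c + k * int j + 1"
    and "(k + 1) * (n - i) - a - b + k * r = int (c + (nat k + 1) * j)"
    and "k * (n + r - i) - m = k * (b + r) - a + k * int j - (m - a)"
    using assms by (simp_all add: i_def c algebra_simps)
  then have "path_count_term k r a b m n i =
      (-1) ^ (nat (n - b) - j) * (real_of_int (int c + 1) / real_of_int (int c + k * int j + 1))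
      * real ((c + (nat k + 1) * j) choose j) * binom_int (k * (b + r) - a + k * int j - (m - a)) i"
    unfolding path_count_term_def by (simp only: binom_int_of_nat)
  then show ?thesis
    using assms(1) by (simp add: raney_closed_form i_def c_def[symmetric])
qed

lemma path_formula_eq_sum_path_count_term:
  fixes k r a b m n :: int
  assumes "0 \<le> k" and "a \<le> k * (b + r)" and "b \<le> n"
  shows "path_formula (nat k) (nat (k * (b + r) - a)) (nat (n - b)) (m - a) =
    (\<Sum>i\<in>{0..n - b}. path_count_term k r a b m n i)"
  unfolding path_formula_def
proof (rule sum.reindex_bij_witness[of _ "\<lambda>i. nat (n - b - i)" "\<lambda>j. n - b - int j"])
  fix j
  assume "j \<in> {0..nat (n - b)}"
  then show "path_count_term k r a b m n (n - b - int j) =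
      (-1) ^ (nat (n - b) - j) * raney (nat k) (nat (k * (b + r) - a)) j
      * binom_int (int (nat (k * (b + r) - a)) + int (nat k) * int j - (m - a)) (int (nat (n - b) - j))"
    using assms by (simp add: path_count_term_reflect)
qed (use assms in auto)

lemma binom_int_eq_0_if_less: "N < j \<Longrightarrow> binom_int N j = 0"
  by (simp add: binom_int_def)

lemma path_count_term_eq_0:
  fixes k r a b m n i :: int
  assumes "0 \<le> k" and "n - b < i \<or> \<lfloor>real_of_int (k * (n + r) - m) / real_of_int (k + 1)\<rfloor> < i"
  shows "path_count_term k r a b m n i = 0"
proof (cases "n - b < i")
  case False
  then have "real_of_int (k * (n + r) - m) / real_of_int (k + 1) < real_of_int i"
    using assms(2) by (simp add: floor_less_iff)
  then have "real_of_int (k * (n + r) - m) < real_of_int (i * (k + 1))"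
    using assms(1) by (simp add: divide_less_eq)
  then have "k * (n + r - i) - m < i"
    by (simp only: of_int_less_iff) (simp add: algebra_simps)
  then show ?thesis
    by (simp add: path_count_term_def binom_int_eq_0_if_less)
qed (simp add: path_count_term_def binom_int_def)

lemma sum_atLeastAtMost_int_eq_if_vanishing:
  fixes f :: "int \<Rightarrow> 'a::comm_monoid_add"
  assumes "\<And>i. 0 \<le> i \<Longrightarrow> min p q < i \<Longrightarrow> f i = 0"
  shows "sum f {0..p} = sum f {0..q}"
proof -
  have "sum f {0..p} = sum f {0..min p q}" and "sum f {0..q} = sum f {0..min p q}"
    using assms by (auto intro!: sum.mono_neutral_right)
  then show ?thesis
    by simp
qed

theorem corollary2p2:
  fixes k r a b m n :: int
  assumes "k \<ge> 1" and "0 \<le> a" and "a \<le> m"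
    and "max 0 (real_of_int a / real_of_int k - real_of_int r) \<le> real_of_int b" and "b \<le> n"
    and "real_of_int n \<ge> real_of_int m / real_of_int k - real_of_int r"
  shows "real (card (lattice_paths_above k r a b m n)) =
    (\<Sum>i \<in> {0..\<lfloor>real_of_int (k * (n + r) - m) / real_of_int (k + 1)\<rfloor>}.
       (-1) ^ nat i * (real_of_int (k * (b + r) - a + 1) / real_of_int (k * (n + r - i) - a + 1))
       * binom_int ((k + 1) * (n - i) - a - b + k * r) (n - b - i)
       * binom_int (k * (n + r - i) - m) i)"
proof -
  have start: "a \<le> k * (b + r)" and target: "m \<le> k * (n + r)"
    using assms(1,4,6) above_line_iff[of k] by simp_all
  have "real (card (lattice_paths_above k r a b m n)) =
      path_formula (nat k) (nat (k * (b + r) - a)) (nat (n - b)) (m - a)"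
    using assms(1,3,5) start target by (rule card_lattice_paths_above_eq_path_formula)
  also have "\<dots> = (\<Sum>i\<in>{0..n - b}. path_count_term k r a b m n i)"
    using assms(1,5) start by (simp add: path_formula_eq_sum_path_count_term)
  also have "\<dots> = (\<Sum>i\<in>{0..\<lfloor>real_of_int (k * (n + r) - m) / real_of_int (k + 1)\<rfloor>}.
      path_count_term k r a b m n i)"
    using assms(1) by (intro sum_atLeastAtMost_int_eq_if_vanishing path_count_term_eq_0) auto
  finally show ?thesis
    by (simp only: path_count_term_def)
qed

end
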